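(* In the Gödel setting described in the context, let $(A,B,R)$ be a $\top$-normalized fuzzy context and $(g,f)\in\mathcal{F}_N$ such that for every $a\in A$ there exists $b\in B$ with $g(b)>R(a,b)$. Then $g^{\uparrow}(a)\le g^{\uparrow_\pi}(a)$ for all $a\in A$.
   Context: Gödel setting: all truth-value sets are $[0,1]$ with the usual order, $x\&y=\min\{x,y\}$, and $z\swarrow y=z\nwarrow y$ equals $1$ if $y\le z$ and $z$ otherwise. A fuzzy context is $(A,B,R)$ with nonempty finite sets $A,B$ and $R\colon A\times B\to[0,1]$. For $g\colon B\to[0,1]$, $f\colon A\to[0,1]$: $g^{\uparrow}(a)=\inf_{b\in B}(R(a,b)\swarrow g(b))$, $f^{\downarrow}(b)=\inf_{a\in A}(R(a,b)\nwarrow f(a))$, $g^{\uparrow_N}(a)=\inf_{b\in B}(g(b)\swarrow R(a,b))$, $f^{\downarrow^N}(b)=\inf_{a\in A}(f(a)\nwarrow R(a,b))$, $g^{\uparrow_\pi}(a)=\sup_{b\in B}\min\{R(a,b),g(b)\}$. $\mathcal{F}_N=\{(g,f)\mid g^{\uparrow_N}=f,\ f^{\downarrow^N}=g\}$. The context is normalized if no row $R(a,\cdot)$ and no column $R(\cdot,b)$ is identically $0$, and no row and no column has all values different from $0$; it is $\top$-normalized if moreover for every $a\in A$ there is $b_a\in B$ with $R(a,b_a)=1$. *)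

theory Defs
  imports Main "HOL.Real"
begin

text \<open>Goedel residuum: resid z y = z swarrow y = z nwarrow y, equal to 1 if y \<le> z and z otherwise.\<close>
definition resid :: "real \<Rightarrow> real \<Rightarrow> real" where
  "resid z y = (if y \<le> z then 1 else z)"

definition truthvals :: "real set" where "truthvals = {0..1}"

text \<open>Fuzzy context (A,B,R) in the Goedel setting; R and fuzzy sets are total functions,
  only their values on A, B (resp. A x B) matter.\<close>
definition fuzzy_context :: "'a set \<Rightarrow> 'b set \<Rightarrow> ('a \<Rightarrow> 'b \<Rightarrow> real) \<Rightarrow> bool" where
  "fuzzy_context A B R \<longleftrightarrow> finite A \<and> finite B \<and> A \<noteq> {} \<and> B \<noteq> {} \<and>
     (\<forall>a\<in>A. \<forall>b\<in>B. R a b \<in> truthvals)"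

definition normalized :: "'a set \<Rightarrow> 'b set \<Rightarrow> ('a \<Rightarrow> 'b \<Rightarrow> real) \<Rightarrow> bool" where
  "normalized A B R \<longleftrightarrow>
     (\<forall>a\<in>A. \<exists>b\<in>B. R a b \<noteq> 0) \<and> (\<forall>b\<in>B. \<exists>a\<in>A. R a b \<noteq> 0) \<and>
     (\<forall>a\<in>A. \<exists>b\<in>B. R a b = 0) \<and> (\<forall>b\<in>B. \<exists>a\<in>A. R a b = 0)"

definition top_normalized :: "'a set \<Rightarrow> 'b set \<Rightarrow> ('a \<Rightarrow> 'b \<Rightarrow> real) \<Rightarrow> bool" where
  "top_normalized A B R \<longleftrightarrow> normalized A B R \<and> (\<forall>a\<in>A. \<exists>b\<in>B. R a b = 1)"

definition up :: "'a set \<Rightarrow> 'b set \<Rightarrow> ('a \<Rightarrow> 'b \<Rightarrow> real) \<Rightarrow> ('b \<Rightarrow> real) \<Rightarrow> 'a \<Rightarrow> real" where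
  "up A B R g a = (INF b\<in>B. resid (R a b) (g b))"

definition down :: "'a set \<Rightarrow> 'b set \<Rightarrow> ('a \<Rightarrow> 'b \<Rightarrow> real) \<Rightarrow> ('a \<Rightarrow> real) \<Rightarrow> 'b \<Rightarrow> real" where
  "down A B R f b = (INF a\<in>A. resid (R a b) (f a))"

definition upN :: "'a set \<Rightarrow> 'b set \<Rightarrow> ('a \<Rightarrow> 'b \<Rightarrow> real) \<Rightarrow> ('b \<Rightarrow> real) \<Rightarrow> 'a \<Rightarrow> real" where
  "upN A B R g a = (INF b\<in>B. resid (g b) (R a b))"

definition downN :: "'a set \<Rightarrow> 'b set \<Rightarrow> ('a \<Rightarrow> 'b \<Rightarrow> real) \<Rightarrow> ('a \<Rightarrow> real) \<Rightarrow> 'b \<Rightarrow> real" where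
  "downN A B R f b = (INF a\<in>A. resid (f a) (R a b))"

definition upPi :: "'a set \<Rightarrow> 'b set \<Rightarrow> ('a \<Rightarrow> 'b \<Rightarrow> real) \<Rightarrow> ('b \<Rightarrow> real) \<Rightarrow> 'a \<Rightarrow> real" where
  "upPi A B R g a = (SUP b\<in>B. min (R a b) (g b))"

definition F_N :: "'a set \<Rightarrow> 'b set \<Rightarrow> ('a \<Rightarrow> 'b \<Rightarrow> real) \<Rightarrow> (('b \<Rightarrow> real) \<times> ('a \<Rightarrow> real)) set" where
  "F_N A B R = {(g, f). (\<forall>b\<in>B. g b \<in> truthvals) \<and> (\<forall>a\<in>A. f a \<in> truthvals) \<and>
      (\<forall>a\<in>A. upN A B R g a = f a) \<and> (\<forall>b\<in>B. downN A B R f b = g b)}"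

end

theory Submission
  imports Defs
begin

(* A single witness b with R a b < g b suffices: there the residuum of g b in R a b collapses to
   R a b = min (R a b) (g b), which bounds the infimum defining up A B R g a from above and the
   supremum defining upPi A B R g a from below. *)

lemma resid_eq_min_if_less:
  assumes "z < y"
  shows "resid z y = min z y"
  using assms by (simp add: resid_def)

lemma up_le_resid:
  assumes "finite B" and "b \<in> B"
  shows "up A B R g a \<le> resid (R a b) (g b)"
  unfolding up_def using assms by (intro cINF_lower) auto

lemma min_le_upPi:
  assumes "finite B" and "b \<in> B"
  shows "min (R a b) (g b) \<le> upPi A B R g a"
  unfolding upPi_def using assms by (intro cSUP_upper) auto

lemma up_le_upPi_if_exceeds:
  assumes "finite B" and "b \<in> B" and "R a b < g b"
  shows "up A B R g a \<le> upPi A B R g a"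
proof -
  have "up A B R g a \<le> resid (R a b) (g b)"
    using assms(1,2) by (rule up_le_resid)
  also have "\<dots> = min (R a b) (g b)"
    using assms(3) by (rule resid_eq_min_if_less)
  also have "\<dots> \<le> upPi A B R g a"
    using assms(1,2) by (rule min_le_upPi)
  finally show ?thesis .
qed

theorem mainTheorem13:
  fixes A :: "'a set" and B :: "'b set" and R :: "'a \<Rightarrow> 'b \<Rightarrow> real"
    and g :: "'b \<Rightarrow> real" and f :: "'a \<Rightarrow> real"
  assumes "fuzzy_context A B R"
    and "top_normalized A B R"
    and "(g, f) \<in> F_N A B R"
    and "\<forall>a\<in>A. \<exists>b\<in>B. g b > R a b"
  shows "\<forall>a\<in>A. up A B R g a \<le> upPi A B R g a"
proof
  fix a assume "a \<in> A"
  then obtain b where "b \<in> B" and "R a b < g b"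
    using assms(4) by blast
  moreover have "finite B"
    using assms(1) by (simp add: fuzzy_context_def)
  ultimately show "up A B R g a \<le> upPi A B R g a"
    by (intro up_le_upPi_if_exceeds)
qed

end
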